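(* Let $X \subseteq \mathbb{R}^n$ be nonempty, let $g : X \to \mathbb{R}$ be a function that is bounded on $X$ and attains its minimum over $X$ at some $x^\star \in X$. Let $\epsilon \ge 0$, $\delta \ge 0$, and let $x^\star_\epsilon \in X$ be $\epsilon$-optimal for $g$, i.e. $g(x^\star_\epsilon) \le g(x^\star) + \epsilon$. For $\hat c \in \mathbb{R}^n$ define $$\ell^\epsilon_{\mathrm{GEN}}(\hat c) = \sup_{x \in X}\big\{ g(x) - g(x^\star_\epsilon) - \hat c^T (x - x^\star_\epsilon)\big\}.$$ Suppose $\hat c$ satisfies $\ell^\epsilon_{\mathrm{GEN}}(\hat c) \le \delta$. Then every $x \in X$ that minimizes $x \mapsto \hat c^T x$ over $X$ satisfies $g(x) \le g(x^\star) + \epsilon + \delta$.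
   Context: $\ell^\epsilon_{\mathrm{GEN}}$ is a surrogate loss for a predicted linear cost $\hat c$ in which the exact minimizer $x^\star$ of $g$ has been replaced by an approximate minimizer $x^\star_\epsilon$. *)

theory Defs
  imports "HOL-Analysis.Analysis"
begin

definition ell_GEN :: "(real ^ 'n) set \<Rightarrow> (real ^ 'n \<Rightarrow> real) \<Rightarrow> real ^ 'n \<Rightarrow> real ^ 'n \<Rightarrow> ereal" where
  "ell_GEN X g xeps c = (SUP x\<in>X. ereal (g x - g xeps - c \<bullet> (x - xeps)))"

end

theory Submission
  imports Defs
begin

(* At a minimizer x of the linear objective over X, the term c^T (x - xeps) is nonpositive,
   so the term of the supremum at x already gives g x - g xeps <= delta; the
   epsilon-optimality of xeps then finishes. *)

lemma ell_GEN_upper: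
  assumes "x \<in> X"
  shows "ereal (g x - g xeps - c \<bullet> (x - xeps)) \<le> ell_GEN X g xeps c"
  unfolding ell_GEN_def using assms by (rule SUP_upper)

lemma ell_GEN_bounds_linear_minimizer:
  assumes loss: "ell_GEN X g xeps c \<le> ereal \<delta>"
    and "xeps \<in> X" and "x \<in> X" and min: "\<forall>y\<in>X. c \<bullet> x \<le> c \<bullet> y"
  shows "g x \<le> g xeps + \<delta>"
proof -
  have "ereal (g x - g xeps - c \<bullet> (x - xeps)) \<le> ereal \<delta>"
    using ell_GEN_upper[OF \<open>x \<in> X\<close>] loss by (rule order_trans)
  then have "g x - g xeps - c \<bullet> (x - xeps) \<le> \<delta>" by simp
  moreover have "c \<bullet> (x - xeps) \<le> 0"
    using min \<open>xeps \<in> X\<close> by (simp add: inner_diff_right)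
  ultimately show ?thesis by linarith
qed

theorem theorem2:
  fixes X :: "(real ^ 'n) set" and g :: "real ^ 'n \<Rightarrow> real"
    and xstar xeps c :: "real ^ 'n" and \<epsilon> \<delta> :: real
  assumes "X \<noteq> {}"
    and "bounded (g ` X)"
    and "xstar \<in> X" and "\<forall>x\<in>X. g xstar \<le> g x"
    and "\<epsilon> \<ge> 0" and "\<delta> \<ge> 0"
    and "xeps \<in> X" and "g xeps \<le> g xstar + \<epsilon>"
    and "ell_GEN X g xeps c \<le> ereal \<delta>"
  shows "\<forall>x\<in>X. (\<forall>y\<in>X. c \<bullet> x \<le> c \<bullet> y) \<longrightarrow> g x \<le> g xstar + \<epsilon> + \<delta>"
proof (intro ballI impI)
  fix x assume "x \<in> X" and "\<forall>y\<in>X. c \<bullet> x \<le> c \<bullet> y"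
  then have "g x \<le> g xeps + \<delta>"
    using ell_GEN_bounds_linear_minimizer \<open>ell_GEN X g xeps c \<le> ereal \<delta>\<close> \<open>xeps \<in> X\<close>
    by blast
  then show "g x \<le> g xstar + \<epsilon> + \<delta>"
    using \<open>g xeps \<le> g xstar + \<epsilon>\<close> by linarith
qed

end
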